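(* Let $n\neq 1$ be a real number, $k_n=n-1$, $m_n=\tfrac12(3n-1)$, and $k_0,k_1,k_2\in\mathbb{R}$. On the phase space with canonical coordinates $(r,\phi,p_r,p_\phi)$, $r>0$, consider $$H_{nd}=\tfrac12 r^{2n}\Big(p_r^2+\tfrac{p_\phi^2}{r^2}\Big)+k_0r^{k_n}+r^{k_n/2}\Big(k_1\cos\big(\tfrac{k_n}{2}\phi\big)+k_2\sin\big(\tfrac{k_n}{2}\phi\big)\Big).$$ Define the real functions $$A_{n1}=r^{n-1}p_\phi^2+k_0,\qquad A_{n2}=\frac{1}{r^{k_n/2}}\Big(r^{m_n}p_rp_\phi+k_1\sin\big(\tfrac{k_n}{2}\phi\big)-k_2\cos\big(\tfrac{k_n}{2}\phi\big)\Big),$$ and the complex functions $A_n=A_{n1}+iA_{n2}$ and $N_\phi=\cos(k_n\phi)+i\sin(k_n\phi)$. Then the complex function $J_{23}=A_nN_\phi$, which is quadratic in the momenta, is a constant of motion of $H_{nd}$: $\{J_{23},H_{nd}\}=0$; equivalently $\mathrm{Re}(J_{23})$ and $\mathrm{Im}(J_{23})$ both Poisson commute with $H_{nd}$.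
   Context: The Poisson bracket is the canonical one in $(r,\phi,p_r,p_\phi)$, extended complex-linearly to complex-valued functions. A constant of motion of $H$ is a function $F$ with $\{F,H\}=0$. *)

theory Defs
  imports "HOL-Analysis.Analysis"
begin

type_synonym phase = "real \<times> real \<times> real \<times> real"

definition pd_r :: "(phase \<Rightarrow> complex) \<Rightarrow> phase \<Rightarrow> complex" where
  "pd_r F z = (case z of (r, ph, pr, pph) \<Rightarrow> vector_derivative (\<lambda>t. F (t, ph, pr, pph)) (at r))"

definition pd_phi :: "(phase \<Rightarrow> complex) \<Rightarrow> phase \<Rightarrow> complex" where
  "pd_phi F z = (case z of (r, ph, pr, pph) \<Rightarrow> vector_derivative (\<lambda>t. F (r, t, pr, pph)) (at ph))"

definition pd_pr :: "(phase \<Rightarrow> complex) \<Rightarrow> phase \<Rightarrow> complex" where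
  "pd_pr F z = (case z of (r, ph, pr, pph) \<Rightarrow> vector_derivative (\<lambda>t. F (r, ph, t, pph)) (at pr))"

definition pd_pphi :: "(phase \<Rightarrow> complex) \<Rightarrow> phase \<Rightarrow> complex" where
  "pd_pphi F z = (case z of (r, ph, pr, pph) \<Rightarrow> vector_derivative (\<lambda>t. F (r, ph, pr, t)) (at pph))"

definition poisson :: "(phase \<Rightarrow> complex) \<Rightarrow> (phase \<Rightarrow> complex) \<Rightarrow> phase \<Rightarrow> complex" where
  "poisson F G z = pd_r F z * pd_pr G z - pd_pr F z * pd_r G z
                 + pd_phi F z * pd_pphi G z - pd_pphi F z * pd_phi G z"

definition k_n :: "real \<Rightarrow> real" where "k_n n = n - 1"
definition m_n :: "real \<Rightarrow> real" where "m_n n = (3 * n - 1) / 2"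

definition H_nd :: "real \<Rightarrow> real \<Rightarrow> real \<Rightarrow> real \<Rightarrow> phase \<Rightarrow> real" where
  "H_nd n k0 k1 k2 z = (case z of (r, ph, pr, pph) \<Rightarrow>
     1/2 * r powr (2 * n) * (pr^2 + pph^2 / r^2) + k0 * r powr (k_n n)
     + r powr (k_n n / 2) * (k1 * cos (k_n n / 2 * ph) + k2 * sin (k_n n / 2 * ph)))"

definition A_n1 :: "real \<Rightarrow> real \<Rightarrow> phase \<Rightarrow> real" where
  "A_n1 n k0 z = (case z of (r, ph, pr, pph) \<Rightarrow> r powr (n - 1) * pph^2 + k0)"

definition A_n2 :: "real \<Rightarrow> real \<Rightarrow> real \<Rightarrow> phase \<Rightarrow> real" where
  "A_n2 n k1 k2 z = (case z of (r, ph, pr, pph) \<Rightarrow>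
     1 / r powr (k_n n / 2) * (r powr (m_n n) * pr * pph + k1 * sin (k_n n / 2 * ph) - k2 * cos (k_n n / 2 * ph)))"

definition A_n :: "real \<Rightarrow> real \<Rightarrow> real \<Rightarrow> real \<Rightarrow> phase \<Rightarrow> complex" where
  "A_n n k0 k1 k2 z = complex_of_real (A_n1 n k0 z) + \<i> * complex_of_real (A_n2 n k1 k2 z)"

definition N_phi :: "real \<Rightarrow> phase \<Rightarrow> complex" where
  "N_phi n z = (case z of (r, ph, pr, pph) \<Rightarrow>
     complex_of_real (cos (k_n n * ph)) + \<i> * complex_of_real (sin (k_n n * ph)))"

definition J_23 :: "real \<Rightarrow> real \<Rightarrow> real \<Rightarrow> real \<Rightarrow> phase \<Rightarrow> complex" where
  "J_23 n k0 k1 k2 z = A_n n k0 k1 k2 z * N_phi n z"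

end

theory Submission
  imports Defs
begin

text \<open>Write \<open>J\<^sub>2\<^sub>3 = A\<^sub>n N\<^sub>\<phi>\<close> and use the Leibniz rule for the Poisson bracket.
  Since \<open>N\<^sub>\<phi> = exp (i k\<^sub>n \<phi>)\<close> depends on \<open>\<phi>\<close> only, \<open>{N\<^sub>\<phi>, H} = i k\<^sub>n \<phi>' N\<^sub>\<phi>\<close> with
  \<open>\<phi>' = \<partial>H/\<partial>p\<^sub>\<phi> = r\<^bsup>2n-2\<^esup> p\<^sub>\<phi>\<close>, while a direct computation gives \<open>{A\<^sub>n, H} = -i k\<^sub>n \<phi>' A\<^sub>n\<close>;
  the two contributions cancel. The computation is done in terms of \<open>e = r\<^bsup>k\<^sub>n/2\<^esup>\<close>: since
  \<open>r\<^bsup>2n\<^esup> = e\<^sup>4 r\<^sup>2\<close> and \<open>r\<^bsup>m\<^sub>n\<^esup> = e\<^sup>3 r\<close>, all functions involved are rational in \<open>r\<close> and \<open>e\<close>,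
  and \<open>de/dr = k\<^sub>n e / (2 r)\<close>.\<close>

definition has_phase_gradient ::
    "(phase \<Rightarrow> complex) \<Rightarrow> complex \<times> complex \<times> complex \<times> complex \<Rightarrow> phase \<Rightarrow> bool" where
  "has_phase_gradient F D z \<longleftrightarrow> (case z of (r, ph, pr, pph) \<Rightarrow> case D of (Dr, Dph, Dpr, Dpph) \<Rightarrow>
     ((\<lambda>t. F (t, ph, pr, pph)) has_vector_derivative Dr) (at r) \<and>
     ((\<lambda>t. F (r, t, pr, pph)) has_vector_derivative Dph) (at ph) \<and>
     ((\<lambda>t. F (r, ph, t, pph)) has_vector_derivative Dpr) (at pr) \<and>
     ((\<lambda>t. F (r, ph, pr, t)) has_vector_derivative Dpph) (at pph))"

lemma poisson_eq_gradient:
  assumes "has_phase_gradient F (a1, a2, a3, a4) z" and "has_phase_gradient G (b1, b2, b3, b4) z"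
  shows "poisson F G z = a1 * b3 - a3 * b1 + a2 * b4 - a4 * b2"
  using assms
  by (cases z) (auto simp: has_phase_gradient_def poisson_def pd_r_def pd_phi_def pd_pr_def pd_pphi_def
      vector_derivative_at)

lemma has_phase_gradient_mult:
  assumes "has_phase_gradient F (a1, a2, a3, a4) z" and "has_phase_gradient G (b1, b2, b3, b4) z"
  shows "has_phase_gradient (\<lambda>z. F z * G z)
    (F z * b1 + a1 * G z, F z * b2 + a2 * G z, F z * b3 + a3 * G z, F z * b4 + a4 * G z) z"
  using assms
  by (cases z) (auto simp: has_phase_gradient_def intro!: has_vector_derivative_mult)

lemma poisson_mult:
  assumes "has_phase_gradient F DF z" "has_phase_gradient G DG z" "has_phase_gradient H DH z"
  shows "poisson (\<lambda>z. F z * G z) H z = poisson F H z * G z + F z * poisson G H z"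
proof -
  obtain a1 a2 a3 a4 where a: "DF = (a1, a2, a3, a4)" by (cases DF) auto
  obtain b1 b2 b3 b4 where b: "DG = (b1, b2, b3, b4)" by (cases DG) auto
  obtain c1 c2 c3 c4 where c: "DH = (c1, c2, c3, c4)" by (cases DH) auto
  show ?thesis
    using assms has_phase_gradient_mult[of F a1 a2 a3 a4 z G b1 b2 b3 b4]
    unfolding a b c by (simp add: poisson_eq_gradient[where z = z] algebra_simps)
qed

lemma N_phi_has_phase_gradient:
  "has_phase_gradient (N_phi n) (0, \<i> * k_n n * N_phi n (r, ph, pr, pph), 0, 0) (r, ph, pr, pph)"
  unfolding has_phase_gradient_def has_vector_derivative_complex_iff
  by (auto simp: N_phi_def intro!: derivative_eq_intros)

lemma powr_eq_power_mult:
  fixes r a b :: real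
  assumes "0 < r" and "b = real j * a + real m"
  shows "r powr b = (r powr a) ^ j * r ^ m"
  using assms by (simp add: powr_add powr_powr powr_realpow[symmetric] mult.commute)

lemma H_nd_half_power_form:
  assumes "0 < r"
  shows "H_nd n k0 k1 k2 (r, ph, pr, pph) =
    1/2 * (r powr (k_n n / 2)) ^ 4 * (r\<^sup>2 * pr\<^sup>2 + pph\<^sup>2) + k0 * (r powr (k_n n / 2))\<^sup>2
    + r powr (k_n n / 2) * (k1 * cos (k_n n / 2 * ph) + k2 * sin (k_n n / 2 * ph))"
proof -
  have "r powr (2 * n) = (r powr (k_n n / 2)) ^ 4 * r\<^sup>2"
    by (rule powr_eq_power_mult[OF assms]) (simp add: k_n_def field_simps)
  moreover have "r powr k_n n = (r powr (k_n n / 2))\<^sup>2"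
    by (rule powr_eq_power_mult[where m = 0, simplified, OF assms]) simp
  ultimately show ?thesis
    using assms by (simp add: H_nd_def algebra_simps power2_eq_square)
qed

lemma A_n1_half_power_form:
  assumes "0 < r"
  shows "A_n1 n k0 (r, ph, pr, pph) = (r powr (k_n n / 2))\<^sup>2 * pph\<^sup>2 + k0"
  using powr_eq_power_mult[OF assms, of "n - 1" 2 "k_n n / 2" 0] by (simp add: A_n1_def k_n_def)

lemma A_n2_half_power_form:
  assumes "0 < r"
  shows "A_n2 n k1 k2 (r, ph, pr, pph) = (r powr (k_n n / 2))\<^sup>2 * r * pr * pph
    + (k1 * sin (k_n n / 2 * ph) - k2 * cos (k_n n / 2 * ph)) / r powr (k_n n / 2)"
proof -
  have "r powr m_n n = (r powr (k_n n / 2)) ^ 3 * r"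
    using powr_eq_power_mult[OF assms, of "m_n n" 3 "k_n n / 2" 1] by (simp add: k_n_def m_n_def field_simps)
  moreover have "r powr (k_n n / 2) > 0" using assms by simp
  ultimately show ?thesis
    by (simp add: A_n2_def field_simps power2_eq_square power3_eq_cube)
qed

lemma DERIV_transform_pos:
  fixes f g :: "real \<Rightarrow> real"
  assumes "\<And>t. 0 < t \<Longrightarrow> f t = g t" and "0 < r" and "(g has_real_derivative D) (at r)"
  shows "(f has_real_derivative D) (at r)"
  using has_field_derivative_transform_within_open[OF assms(3), of "{0<..}" f] assms(1,2) by auto

context
  fixes n k0 k1 k2 r ph pr pph e C S :: real
  assumes r_pos: "0 < r" and e_eq: "e = r powr (k_n n / 2)"
    and C_eq: "C = cos (k_n n / 2 * ph)" and S_eq: "S = sin (k_n n / 2 * ph)"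
begin

lemma H_nd_has_phase_gradient:
  "has_phase_gradient (\<lambda>z. complex_of_real (H_nd n k0 k1 k2 z))
     (of_real (k_n n * e ^ 4 * (r\<^sup>2 * pr\<^sup>2 + pph\<^sup>2) / r + e ^ 4 * r * pr\<^sup>2 + k_n n * k0 * e\<^sup>2 / r
               + k_n n / 2 * e / r * (k1 * C + k2 * S)),
      of_real (k_n n / 2 * e * (k2 * C - k1 * S)),
      of_real (e ^ 4 * r\<^sup>2 * pr),
      of_real (e ^ 4 * pph))
     (r, ph, pr, pph)"
proof -
  note H_eq = H_nd_half_power_form[OF r_pos, where n = n, folded e_eq]
  have "((\<lambda>t. H_nd n k0 k1 k2 (t, ph, pr, pph)) has_real_derivative
      k_n n * e ^ 4 * (r\<^sup>2 * pr\<^sup>2 + pph\<^sup>2) / r + e ^ 4 * r * pr\<^sup>2 + k_n n * k0 * e\<^sup>2 / r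
        + k_n n / 2 * e / r * (k1 * C + k2 * S)) (at r)"
    apply (rule DERIV_transform_pos[OF H_nd_half_power_form r_pos], assumption)
    apply (rule derivative_eq_intros refl r_pos)+
    using r_pos unfolding powr_diff e_eq[symmetric] C_eq S_eq
    by (simp add: eval_nat_numeral algebra_simps)
  moreover have "((\<lambda>t. H_nd n k0 k1 k2 (r, t, pr, pph)) has_real_derivative
      k_n n / 2 * e * (k2 * C - k1 * S)) (at ph)"
    unfolding H_eq C_eq S_eq
    by (rule derivative_eq_intros refl)+ (simp add: algebra_simps)
  moreover have "((\<lambda>t. H_nd n k0 k1 k2 (r, ph, t, pph)) has_real_derivative e ^ 4 * r\<^sup>2 * pr) (at pr)"
    unfolding H_eq
    by (rule derivative_eq_intros refl)+ (simp add: algebra_simps)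
  moreover have "((\<lambda>t. H_nd n k0 k1 k2 (r, ph, pr, t)) has_real_derivative e ^ 4 * pph) (at pph)"
    unfolding H_eq
    by (rule derivative_eq_intros refl)+ (simp add: algebra_simps)
  ultimately show ?thesis
    unfolding has_phase_gradient_def prod.case by (intro conjI has_vector_derivative_of_real)
qed

lemma A_n_has_phase_gradient:
  "has_phase_gradient (A_n n k0 k1 k2)
     (Complex (k_n n * e\<^sup>2 * pph\<^sup>2 / r)
        (k_n n * e\<^sup>2 * pr * pph + e\<^sup>2 * pr * pph - k_n n * (k1 * S - k2 * C) / (2 * e * r)),
      Complex 0 (k_n n * (k1 * C + k2 * S) / (2 * e)),
      Complex 0 (e\<^sup>2 * r * pph),
      Complex (2 * e\<^sup>2 * pph) (e\<^sup>2 * r * pr))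
     (r, ph, pr, pph)"
proof -
  have e_neq: "e \<noteq> 0" using r_pos e_eq by simp
  note A1_eq = A_n1_half_power_form[OF r_pos, where n = n, folded e_eq]
  note A2_eq = A_n2_half_power_form[OF r_pos, where n = n, folded e_eq]
  have "((\<lambda>t. A_n1 n k0 (t, ph, pr, pph)) has_real_derivative k_n n * e\<^sup>2 * pph\<^sup>2 / r) (at r)"
    apply (rule DERIV_transform_pos[OF A_n1_half_power_form r_pos], assumption)
    apply (rule derivative_eq_intros refl r_pos)+
    using r_pos unfolding powr_diff e_eq[symmetric]
    by (simp add: eval_nat_numeral algebra_simps)
  moreover have "((\<lambda>t. A_n2 n k1 k2 (t, ph, pr, pph)) has_real_derivative
      k_n n * e\<^sup>2 * pr * pph + e\<^sup>2 * pr * pph - k_n n * (k1 * S - k2 * C) / (2 * e * r)) (at r)"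
    apply (rule DERIV_transform_pos[OF A_n2_half_power_form r_pos], assumption)
    apply (rule derivative_eq_intros refl r_pos e_neq[unfolded e_eq])+
    using r_pos e_neq unfolding powr_diff e_eq[symmetric] C_eq S_eq
    by (simp add: field_simps eval_nat_numeral)
  moreover have "((\<lambda>t. A_n1 n k0 (r, t, pr, pph)) has_real_derivative 0) (at ph)"
    unfolding A1_eq by (rule derivative_eq_intros refl)+
  moreover have "((\<lambda>t. A_n2 n k1 k2 (r, t, pr, pph)) has_real_derivative
      k_n n * (k1 * C + k2 * S) / (2 * e)) (at ph)"
    unfolding A2_eq C_eq S_eq
    by (rule derivative_eq_intros refl e_neq)+ (simp add: field_simps e_neq)
  moreover have "((\<lambda>t. A_n1 n k0 (r, ph, t, pph)) has_real_derivative 0) (at pr)"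
    unfolding A1_eq by (rule derivative_eq_intros refl)+
  moreover have "((\<lambda>t. A_n2 n k1 k2 (r, ph, t, pph)) has_real_derivative e\<^sup>2 * r * pph) (at pr)"
    unfolding A2_eq by (rule derivative_eq_intros refl)+ simp
  moreover have "((\<lambda>t. A_n1 n k0 (r, ph, pr, t)) has_real_derivative 2 * e\<^sup>2 * pph) (at pph)"
    unfolding A1_eq by (rule derivative_eq_intros refl)+ simp
  moreover have "((\<lambda>t. A_n2 n k1 k2 (r, ph, pr, t)) has_real_derivative e\<^sup>2 * r * pr) (at pph)"
    unfolding A2_eq by (rule derivative_eq_intros refl)+ simp
  ultimately show ?thesis
    by (simp add: has_phase_gradient_def has_vector_derivative_complex_iff A_n_def)
qed

lemma A_n_eq_Complex:
  "A_n n k0 k1 k2 (r, ph, pr, pph) = Complex (e\<^sup>2 * pph\<^sup>2 + k0) (e\<^sup>2 * r * pr * pph + (k1 * S - k2 * C) / e)"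
  using A_n1_half_power_form[OF r_pos, where n = n] A_n2_half_power_form[OF r_pos, where n = n]
  by (simp add: A_n_def complex_eq_iff e_eq C_eq S_eq)

lemma poisson_A_n_H_nd:
  "poisson (A_n n k0 k1 k2) (\<lambda>z. complex_of_real (H_nd n k0 k1 k2 z)) (r, ph, pr, pph)
     = - \<i> * k_n n * e ^ 4 * pph * A_n n k0 k1 k2 (r, ph, pr, pph)"
proof -
  have "e \<noteq> 0" using r_pos e_eq by simp
  then show ?thesis
    using r_pos
    by (simp add: poisson_eq_gradient[OF A_n_has_phase_gradient H_nd_has_phase_gradient]
        A_n_eq_Complex complex_eq_iff field_simps eval_nat_numeral)
qed

end

theorem proposition2:
  fixes n k0 k1 k2 r ph pr pph :: real
  assumes "n \<noteq> 1" and "r > 0"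
  shows "poisson (J_23 n k0 k1 k2) (\<lambda>z. complex_of_real (H_nd n k0 k1 k2 z)) (r, ph, pr, pph) = 0"
proof -
  define e where "e = r powr (k_n n / 2)"
  let ?H = "\<lambda>z. complex_of_real (H_nd n k0 k1 k2 z)" and ?z = "(r, ph, pr, pph)"
  note A = A_n_has_phase_gradient[OF \<open>r > 0\<close> e_def refl refl]
  note H = H_nd_has_phase_gradient[OF \<open>r > 0\<close> e_def refl refl]
  note N = N_phi_has_phase_gradient[of n r ph pr pph]
  have "J_23 n k0 k1 k2 = (\<lambda>z. A_n n k0 k1 k2 z * N_phi n z)"
    by (simp add: fun_eq_iff J_23_def)
  then have "poisson (J_23 n k0 k1 k2) ?H ?z
      = poisson (A_n n k0 k1 k2) ?H ?z * N_phi n ?z + A_n n k0 k1 k2 ?z * poisson (N_phi n) ?H ?z"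
    using poisson_mult[OF A N H] by simp
  also have "\<dots> = 0"
    by (simp add: poisson_A_n_H_nd[OF \<open>r > 0\<close> e_def refl refl] poisson_eq_gradient[OF N H])
  finally show ?thesis .
qed

end
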